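(* Let $i\in\mathbb{N}_0$ and let $\alpha,\beta,\epsilon\in\mathbb{C}$. Then $$F^{1:1;2}_{1:0;1}\left[\begin{matrix}\alpha: & \epsilon\,; & \beta-\epsilon,\ 1+\alpha-2\beta+\epsilon+i\,;\\ \beta: & -\,; & 1+\alpha-\beta+\epsilon+i\,;\end{matrix}\ \tfrac12,\ \tfrac12\right] =\frac{2^{i+\alpha-2\beta+2\epsilon}\,\Gamma(\beta-\epsilon-i)\,\Gamma(1+\alpha-\beta+\epsilon+i)}{\Gamma(\beta-\epsilon)\,\Gamma(1+\alpha-2\beta+2\epsilon+i)}\sum_{r=0}^{i}(-1)^r\binom{i}{r}\frac{\Gamma\!\left(\epsilon-\beta+\frac{1+\alpha+i+r}{2}\right)}{\Gamma\!\left(\frac{1+\alpha-i+r}{2}\right)}$$ and $$F^{1:1;2}_{1:0;1}\left[\begin{matrix}\alpha: & \epsilon\,; & \beta-\epsilon,\ 1+\alpha-2\beta+\epsilon-i\,;\\ \beta: & -\,; & 1+\alpha-\beta+\epsilon-i\,;\end{matrix}\ \tfrac12,\ \tfrac12\right] =\frac{2^{-i+\alpha-2\beta+2\epsilon}\,\Gamma(1+\alpha-\beta+\epsilon-i)}{\Gamma(1+\alpha-2\beta+2\epsilon-i)}\sum_{r=0}^{i}\binom{i}{r}\frac{\Gamma\!\left(\epsilon-\beta+\frac{1+\alpha-i+r}{2}\right)}{\Gamma\!\left(\frac{1+\alpha-i+r}{2}\right)}.$$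
   Context: For $\lambda\in\mathbb{C}$ and $n\in\mathbb{N}_0$, $(\lambda)_0=1$ and $(\lambda)_n=\lambda(\lambda+1)\cdots(\lambda+n-1)$; $\Gamma$ is Euler's Gamma function and $\binom{i}{r}$ the binomial coefficient. The (generalized) Kampé de Fériet function is defined by $$F^{H:A;B}_{G:C;D}\left[\begin{matrix}(h_H): & (a_A)\,; & (b_B)\,;\\ (g_G): & (c_C)\,; & (d_D)\,;\end{matrix}\ x,\ y\right]=\sum_{m=0}^\infty\sum_{n=0}^\infty\frac{\prod_{j=1}^H(h_j)_{m+n}\prod_{j=1}^A(a_j)_m\prod_{j=1}^B(b_j)_n}{\prod_{j=1}^G(g_j)_{m+n}\prod_{j=1}^C(c_j)_m\prod_{j=1}^D(d_j)_n}\frac{x^m}{m!}\frac{y^n}{n!},$$ where a dash "$-$" denotes an empty list of parameters (empty products equal $1$). Parameters are tacitly assumed to be such that the double series converges, no denominator parameter is a non-positive integer, and all Gamma values appearing are finite. *)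

theory Defs
  imports "HOL-Analysis.Analysis"
begin

text \<open>General (generalized) Kampe de Feriet function. The parameter lists
  hs, gs, as, cs, bs, ds correspond to (h_H), (g_G), (a_A), (c_C), (b_B), (d_D);
  an empty list stands for a dash.\<close>

definition kdf_term ::
  "complex list \<Rightarrow> complex list \<Rightarrow> complex list \<Rightarrow> complex list \<Rightarrow>
   complex list \<Rightarrow> complex list \<Rightarrow> complex \<Rightarrow> complex \<Rightarrow> nat \<times> nat \<Rightarrow> complex" where
  "kdf_term hs gs as cs bs ds x y = (\<lambda>(m, n).
     (prod_list (map (\<lambda>h. pochhammer h (m + n)) hs)
      * prod_list (map (\<lambda>a. pochhammer a m) as)
      * prod_list (map (\<lambda>b. pochhammer b n) bs))
     / (prod_list (map (\<lambda>g. pochhammer g (m + n)) gs)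
      * prod_list (map (\<lambda>c. pochhammer c m) cs)
      * prod_list (map (\<lambda>d. pochhammer d n) ds))
     * (x ^ m / fact m) * (y ^ n / fact n))"

definition kdf ::
  "complex list \<Rightarrow> complex list \<Rightarrow> complex list \<Rightarrow> complex list \<Rightarrow>
   complex list \<Rightarrow> complex list \<Rightarrow> complex \<Rightarrow> complex \<Rightarrow> complex" where
  "kdf hs gs as cs bs ds x y = infsum (kdf_term hs gs as cs bs ds x y) UNIV"

end

theory Submission
  imports Defs "HOL-Complex_Analysis.Complex_Analysis"
begin

(* Summing the double series along the diagonals m + n = N, each diagonal is a terminating
   Pfaff-Saalschuetz sum, and the Kampe de Feriet function collapses to the Gauss series
   2F1(alpha, e; (1 + alpha + e +- i)/2; 1/2) with e = 1 + alpha - 2 beta + 2 epsilon +- i.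
   For real parameters in a suitable range this series is Euler's integral; the substitution
   t = 2s/(1 + s) turns its kernel into s^(e-1) (1 - s^2)^p (1 -+ s)^i, and expanding (1 -+ s)^i
   by the binomial theorem leaves a finite sum of Beta integrals. Both sides are holomorphic in
   each parameter off a countable closed set, so the identity extends to all complex parameters by
   analytic continuation, first in alpha and then in e. *)

definition hyp2f1_term :: "'a \<Rightarrow> 'a \<Rightarrow> 'a \<Rightarrow> 'a \<Rightarrow> nat \<Rightarrow> 'a::real_normed_field" where
  "hyp2f1_term a b c z n = pochhammer a n * pochhammer b n / (pochhammer c n * fact n) * z ^ n"

section \<open>The diagonal sums: a terminating Saalschuetz identity\<close>

lemma saalschutz_summand_expansion:
  fixes b c \<epsilon> :: "'a::comm_ring_1"
  assumes "n \<le> N"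
  shows "of_nat (N choose n) * pochhammer \<epsilon> (N - n) * pochhammer b n * pochhammer c n
           * pochhammer (c + b + \<epsilon> + of_nat n) (N - n)
       = (\<Sum>m=n..N. of_nat (N choose m) * of_nat (m choose n)
           * pochhammer \<epsilon> (N - n) * pochhammer b n * pochhammer c m * pochhammer (b + \<epsilon>) (N - m))"
proof -
  have "c + b + \<epsilon> + of_nat n = c + of_nat n + (b + \<epsilon>)"
    by (simp add: algebra_simps)
  then have "pochhammer c n * pochhammer (c + b + \<epsilon> + of_nat n) (N - n)
      = (\<Sum>k\<le>N - n. of_nat ((N - n) choose k) * pochhammer c (n + k) * pochhammer (b + \<epsilon>) (N - n - k))"
    by (simp only:) (simp add: pochhammer_binomial_sum[of "c + of_nat n" "b + \<epsilon>"] sum_distrib_left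
        pochhammer_product' mult_ac)
  also have "\<dots> = (\<Sum>m=n..N. of_nat ((N - n) choose (m - n)) * pochhammer c m * pochhammer (b + \<epsilon>) (N - m))"
    using assms by (intro sum.reindex_bij_witness[where i = "\<lambda>m. m - n" and j = "\<lambda>k. n + k"]) auto
  finally have inner: "pochhammer c n * pochhammer (c + b + \<epsilon> + of_nat n) (N - n)
      = (\<Sum>m=n..N. of_nat ((N - n) choose (m - n)) * pochhammer c m * pochhammer (b + \<epsilon>) (N - m))" .
  have choose: "of_nat (N choose n) * of_nat ((N - n) choose (m - n))
      = (of_nat (N choose m) * of_nat (m choose n) :: 'a)"
    if "n \<le> m" "m \<le> N" for m
    using choose_mult[of n m N] that by (simp flip: of_nat_mult)
  have "of_nat (N choose n) * pochhammer \<epsilon> (N - n) * pochhammer b n * pochhammer c n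
           * pochhammer (c + b + \<epsilon> + of_nat n) (N - n)
      = of_nat (N choose n) * pochhammer \<epsilon> (N - n) * pochhammer b n
           * (\<Sum>m=n..N. of_nat ((N - n) choose (m - n)) * pochhammer c m * pochhammer (b + \<epsilon>) (N - m))"
    by (subst inner[symmetric]) (simp only: mult.assoc)
  also have "\<dots> = (\<Sum>m=n..N. of_nat (N choose m) * of_nat (m choose n)
           * pochhammer \<epsilon> (N - n) * pochhammer b n * pochhammer c m * pochhammer (b + \<epsilon>) (N - m))"
    unfolding sum_distrib_left by (intro sum.cong refl, subst choose[symmetric]) (auto simp: mult_ac)
  finally show ?thesis .
qed

lemma sum_binomial_pochhammer_shifted:
  fixes b \<epsilon> :: "'a::comm_ring_1"
  assumes "m \<le> N"
  shows "(\<Sum>n\<le>m. of_nat (m choose n) * pochhammer b n * pochhammer \<epsilon> (N - n))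
       = pochhammer \<epsilon> (N - m) * pochhammer (b + \<epsilon> + of_nat (N - m)) m"
proof -
  have split: "pochhammer \<epsilon> (N - n) = pochhammer \<epsilon> (N - m) * pochhammer (\<epsilon> + of_nat (N - m)) (m - n)"
    if "n \<le> m" for n
    using pochhammer_product[of "N - m" "N - n" \<epsilon>] that assms by simp
  have "(\<Sum>n\<le>m. of_nat (m choose n) * pochhammer b n * pochhammer \<epsilon> (N - n))
      = pochhammer \<epsilon> (N - m)
        * (\<Sum>n\<le>m. of_nat (m choose n) * pochhammer b n * pochhammer (\<epsilon> + of_nat (N - m)) (m - n))"
    unfolding sum_distrib_left
  proof (intro sum.cong refl)
    fix n assume "n \<in> {..m}"
    then show "of_nat (m choose n) * pochhammer b n * pochhammer \<epsilon> (N - n)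
        = pochhammer \<epsilon> (N - m)
          * (of_nat (m choose n) * pochhammer b n * pochhammer (\<epsilon> + of_nat (N - m)) (m - n))"
      using split[of n] by (simp add: mult_ac)
  qed
  also have "\<dots> = pochhammer \<epsilon> (N - m) * pochhammer (b + \<epsilon> + of_nat (N - m)) m"
    using pochhammer_binomial_sum[of b "\<epsilon> + of_nat (N - m)" m] by (simp only: add.assoc)
  finally show ?thesis .
qed

lemma saalschutz_polynomial_identity:
  fixes b c \<epsilon> :: "'a::comm_ring_1"
  shows "(\<Sum>n\<le>N. of_nat (N choose n) * pochhammer \<epsilon> (N - n) * pochhammer b n * pochhammer c n
            * pochhammer (c + b + \<epsilon> + of_nat n) (N - n))
       = pochhammer (b + \<epsilon>) N * pochhammer (c + \<epsilon>) N"
proof -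
  define F where "F n m = of_nat (N choose m) * of_nat (m choose n) * pochhammer \<epsilon> (N - n)
    * pochhammer b n * pochhammer c m * pochhammer (b + \<epsilon>) (N - m)" for n m
  have upper: "{n..N} = {m \<in> {..N}. n \<le> m}" for n
    by auto
  have lower: "{n \<in> {..N}. n \<le> m} = {..m}" if "m \<le> N" for m
    using that by auto
  have "(\<Sum>n\<le>N. of_nat (N choose n) * pochhammer \<epsilon> (N - n) * pochhammer b n * pochhammer c n
            * pochhammer (c + b + \<epsilon> + of_nat n) (N - n))
      = (\<Sum>n\<le>N. \<Sum>m\<in>{m \<in> {..N}. n \<le> m}. F n m)"
    unfolding F_def using upper by (intro sum.cong refl) (auto simp: saalschutz_summand_expansion)
  also have "\<dots> = (\<Sum>m\<le>N. \<Sum>n\<in>{n \<in> {..N}. n \<le> m}. F n m)"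
    by (rule sum.swap_restrict) auto
  also have "\<dots> = (\<Sum>m\<le>N. of_nat (N choose m) * pochhammer c m * pochhammer (b + \<epsilon>) (N - m)
            * (\<Sum>n\<le>m. of_nat (m choose n) * pochhammer b n * pochhammer \<epsilon> (N - n)))"
    using lower by (intro sum.cong refl) (simp add: F_def sum_distrib_left mult_ac)
  also have "\<dots> = (\<Sum>m\<le>N. of_nat (N choose m) * pochhammer c m * pochhammer \<epsilon> (N - m)) * pochhammer (b + \<epsilon>) N"
  proof -
    have "of_nat (N choose m) * pochhammer c m * pochhammer (b + \<epsilon>) (N - m)
            * (\<Sum>n\<le>m. of_nat (m choose n) * pochhammer b n * pochhammer \<epsilon> (N - n))
        = of_nat (N choose m) * pochhammer c m * pochhammer \<epsilon> (N - m) * pochhammer (b + \<epsilon>) N"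
      if m: "m \<le> N" for m
    proof -
      have "pochhammer (b + \<epsilon>) (N - m) * pochhammer (b + \<epsilon> + of_nat (N - m)) m = pochhammer (b + \<epsilon>) N"
        using pochhammer_product'[of "b + \<epsilon>" "N - m" m] m by simp
      then show ?thesis
        unfolding sum_binomial_pochhammer_shifted[OF m] by (metis mult.assoc mult.left_commute)
    qed
    then show ?thesis
      unfolding sum_distrib_right by (auto intro!: sum.cong)
  qed
  also have "\<dots> = pochhammer (b + \<epsilon>) N * pochhammer (c + \<epsilon>) N"
    unfolding pochhammer_binomial_sum[of c \<epsilon> N] by (rule mult.commute)
  finally show ?thesis .
qed

lemma saalschutz_sum:
  fixes b c \<epsilon> d :: "'a::field_char_0"
  assumes d: "d \<notin> \<int>\<^sub>\<le>\<^sub>0" and d_eq: "d = b + c + \<epsilon>"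
  shows "(\<Sum>n\<le>N. of_nat (N choose n) * pochhammer \<epsilon> (N - n) * pochhammer b n * pochhammer c n / pochhammer d n)
       = pochhammer (b + \<epsilon>) N * pochhammer (c + \<epsilon>) N / pochhammer d N"
proof -
  have nonzero: "pochhammer d n \<noteq> 0" for n
    using d pochhammer_eq_0_imp_nonpos_Int by blast
  have shift: "x / pochhammer d n = x * pochhammer (c + b + \<epsilon> + of_nat n) (N - n) / pochhammer d N"
    if "n \<le> N" for n x
  proof -
    have "pochhammer d N = pochhammer d n * pochhammer (c + b + \<epsilon> + of_nat n) (N - n)"
      using pochhammer_product[OF that, of d] by (simp add: d_eq add_ac)
    then show ?thesis
      using nonzero[of n] nonzero[of N] by (simp add: field_simps)
  qed
  have "(\<Sum>n\<le>N. of_nat (N choose n) * pochhammer \<epsilon> (N - n) * pochhammer b n * pochhammer c n / pochhammer d n)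
      = (\<Sum>n\<le>N. of_nat (N choose n) * pochhammer \<epsilon> (N - n) * pochhammer b n * pochhammer c n
            * pochhammer (c + b + \<epsilon> + of_nat n) (N - n)) / pochhammer d N"
    unfolding sum_divide_distrib by (intro sum.cong refl shift) simp
  also have "\<dots> = pochhammer (b + \<epsilon>) N * pochhammer (c + \<epsilon>) N / pochhammer d N"
    by (simp only: saalschutz_polynomial_identity)
  finally show ?thesis .
qed

lemma has_sum_imp_sums_diagonals:
  fixes f :: "nat \<times> nat \<Rightarrow> 'a::{topological_comm_monoid_add,t3_space}"
  assumes "(f has_sum S) UNIV"
  shows "(\<lambda>N. \<Sum>n\<le>N. f (N - n, n)) sums S"
proof -
  have "bij_betw (\<lambda>(N, n). (N - n, n)) (SIGMA N:UNIV. {..N}) (UNIV :: (nat \<times> nat) set)"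
    by (rule bij_betwI[where g = "\<lambda>(m, n). (m + n, n)"]) auto
  with assms have "((\<lambda>(N, n). f (N - n, n)) has_sum S) (SIGMA N:UNIV. {..N})"
    by (simp add: has_sum_reindex_bij_betw[symmetric] case_prod_unfold)
  then have "((\<lambda>N. \<Sum>n\<le>N. f (N - n, n)) has_sum S) UNIV"
    by (rule has_sum_SigmaD) (auto intro: has_sum_finiteI)
  then show ?thesis
    by (rule has_sum_imp_sums)
qed

lemma kdf_term_diagonal:
  assumes "n \<le> N"
  shows "kdf_term [\<alpha>] [\<beta>] [\<epsilon>] [] [b, c] [d] z z (N - n, n)
       = pochhammer \<alpha> N / pochhammer \<beta> N * z ^ N / fact N
         * (of_nat (N choose n) * pochhammer \<epsilon> (N - n) * pochhammer b n * pochhammer c n / pochhammer d n)"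
proof -
  have "kdf_term [\<alpha>] [\<beta>] [\<epsilon>] [] [b, c] [d] z z (N - n, n)
      = pochhammer \<alpha> N / pochhammer \<beta> N
        * (pochhammer \<epsilon> (N - n) * pochhammer b n * pochhammer c n / pochhammer d n)
        * (z ^ (N - n) * z ^ n / (fact (N - n) * fact n))"
    using assms by (simp add: kdf_term_def divide_inverse mult_ac)
  also have "z ^ (N - n) * z ^ n / (fact (N - n) * fact n) = z ^ N / fact N * of_nat (N choose n)"
  proof -
    have "(fact N :: complex) = of_nat (fact n * fact (N - n) * (N choose n))"
      by (simp only: binomial_fact_lemma[OF assms] of_nat_fact)
    moreover have "z ^ (N - n) * z ^ n = z ^ N"
      using assms by (simp flip: power_add)
    ultimately show ?thesis
      using assms by simp
  qed
  finally show ?thesis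
    by (simp add: divide_inverse mult_ac)
qed

lemma hyp2f1_term_sums_kdf:
  assumes summable: "kdf_term [\<alpha>] [\<beta>] [\<epsilon>] [] [\<beta> - \<epsilon>, c] [d] z z summable_on UNIV"
    and \<beta>: "\<beta> \<notin> \<int>\<^sub>\<le>\<^sub>0" and d: "d \<notin> \<int>\<^sub>\<le>\<^sub>0" and d_eq: "d = \<beta> + c"
  shows "hyp2f1_term \<alpha> (c + \<epsilon>) d z sums kdf [\<alpha>] [\<beta>] [\<epsilon>] [] [\<beta> - \<epsilon>, c] [d] z z"
proof -
  have "(\<Sum>n\<le>N. kdf_term [\<alpha>] [\<beta>] [\<epsilon>] [] [\<beta> - \<epsilon>, c] [d] z z (N - n, n)) = hyp2f1_term \<alpha> (c + \<epsilon>) d z N"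
    for N
  proof -
    have "(\<Sum>n\<le>N. kdf_term [\<alpha>] [\<beta>] [\<epsilon>] [] [\<beta> - \<epsilon>, c] [d] z z (N - n, n))
        = pochhammer \<alpha> N / pochhammer \<beta> N * z ^ N / fact N * (\<Sum>n\<le>N. of_nat (N choose n)
            * pochhammer \<epsilon> (N - n) * pochhammer (\<beta> - \<epsilon>) n * pochhammer c n / pochhammer d n)"
      unfolding sum_distrib_left by (intro sum.cong refl) (simp add: kdf_term_diagonal)
    also have "\<dots> = pochhammer \<alpha> N / pochhammer \<beta> N * z ^ N / fact N
        * (pochhammer \<beta> N * pochhammer (c + \<epsilon>) N / pochhammer d N)"
      using saalschutz_sum[OF d, of "\<beta> - \<epsilon>" c \<epsilon> N] d_eq by simp
    also have "\<dots> = hyp2f1_term \<alpha> (c + \<epsilon>) d z N"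
    proof -
      have "pochhammer \<beta> N \<noteq> 0" "pochhammer d N \<noteq> 0"
        using \<beta> d pochhammer_eq_0_imp_nonpos_Int by blast+
      then show ?thesis
        by (simp add: hyp2f1_term_def field_simps)
    qed
    finally show ?thesis .
  qed
  moreover have "(kdf_term [\<alpha>] [\<beta>] [\<epsilon>] [] [\<beta> - \<epsilon>, c] [d] z z
      has_sum kdf [\<alpha>] [\<beta>] [\<epsilon>] [] [\<beta> - \<epsilon>, c] [d] z z) UNIV"
    using summable by (simp add: kdf_def summable_iff_has_sum_infsum)
  ultimately show ?thesis
    using has_sum_imp_sums_diagonals by fastforce
qed

section \<open>Euler's integral at 1/2 for real parameters\<close>

lemma pochhammer_series_sums_powr:
  fixes a u :: real
  assumes "\<bar>u\<bar> < 1"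
  shows "(\<lambda>n. pochhammer a n / fact n * u ^ n) sums (1 - u) powr (- a)"
proof -
  have "((- a) gchoose n) * (- u) ^ n = pochhammer a n / fact n * u ^ n" for n
    by (simp add: gbinomial_pochhammer power_minus[of u] flip: power_add mult_2)
  then show ?thesis
    using gen_binomial_real[of "- u" "- a"] assms by simp
qed

lemma sums_integral_nonneg_series:
  fixes g :: "nat \<Rightarrow> 'n::euclidean_space \<Rightarrow> real"
  assumes int: "\<And>n. (g n has_integral I n) S" and f: "f integrable_on S"
    and nonneg: "\<And>n x. x \<in> S \<Longrightarrow> g n x \<ge> 0"
    and sums: "\<And>x. x \<in> S \<Longrightarrow> (\<lambda>n. g n x) sums f x"
  shows "I sums integral S f"
proof -
  have partial: "((\<lambda>x. \<Sum>n<k. g n x) has_integral (\<Sum>n<k. I n)) S" for k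
    by (intro has_integral_sum int) simp
  have "(\<lambda>k. integral S (\<lambda>x. \<Sum>n<k. g n x)) \<longlonglongrightarrow> integral S f"
  proof (rule dominated_convergence(2)[OF _ f])
    show "(\<lambda>x. \<Sum>n<k. g n x) integrable_on S" for k
      using partial by blast
    show "norm (\<Sum>n<k. g n x) \<le> f x" if "x \<in> S" for k x
      using sum_le_suminf[OF sums_summable[OF sums[OF that]], of "{..<k}"] nonneg[OF that]
        sums_unique[OF sums[OF that]] by (simp add: sum_nonneg)
    show "(\<lambda>k. \<Sum>n<k. g n x) \<longlonglongrightarrow> f x" if "x \<in> S" for x
      using sums[OF that] by (simp add: sums_def)
  qed
  moreover have "integral S (\<lambda>x. \<Sum>n<k. g n x) = (\<Sum>n<k. I n)" for k
    using partial by (rule integral_unique)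
  ultimately show ?thesis
    by (simp add: sums_def)
qed

lemma has_integral_Beta_power:
  fixes x y :: real
  assumes "x > 0" "y > 0"
  shows "((\<lambda>t. t ^ n * (t powr (x - 1) * (1 - t) powr (y - 1))) has_integral Beta (x + of_nat n) y) {0..1}"
proof (rule has_integral_spike_finite[OF _ _ has_integral_Beta_real])
  show "t ^ n * (t powr (x - 1) * (1 - t) powr (y - 1)) = t powr (x + of_nat n - 1) * (1 - t) powr (y - 1)"
    if "t \<in> {0..1} - {0}" for t
    using that by (simp add: powr_add powr_realpow[symmetric] powr_diff field_simps)
qed (use assms in auto)

lemma Beta_add_of_nat:
  fixes x y :: real
  assumes "x > 0" "y > 0"
  shows "Beta (x + of_nat n) y = Beta x y * pochhammer x n / pochhammer (x + y) n"
proof -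
  have "Gamma (x + of_nat n) = pochhammer x n * Gamma x"
    using assms by (simp add: pochhammer_Gamma Gamma_eq_zero_iff nonpos_Ints_def)
  moreover have "Gamma (x + of_nat n + y) = pochhammer (x + y) n * Gamma (x + y)"
    using assms pochhammer_Gamma[of "x + y" n] by (auto simp: Gamma_eq_zero_iff nonpos_Ints_def add_ac)
  moreover have "pochhammer (x + y) n > 0"
    using assms by (intro pochhammer_pos) auto
  ultimately show ?thesis
    by (simp add: Beta_def field_simps)
qed

lemma hyp2f1_half_sums_Euler_integral:
  fixes a x y :: real
  assumes a: "a > 0" and x: "x > 1" and y: "y > 1"
  shows "hyp2f1_term a x (x + y) (1/2)
           sums (integral {0..1} (\<lambda>t. t powr (x - 1) * (1 - t) powr (y - 1) * (1 - t/2) powr (- a)) / Beta x y)"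
proof -
  define w where "w t = t powr (x - 1) * (1 - t) powr (y - 1)" for t :: real
  define c where "c n = pochhammer a n / (fact n * 2 ^ n)" for n
  have "(\<lambda>n. c n * Beta (x + of_nat n) y) sums integral {0..1} (\<lambda>t. w t * (1 - t/2) powr (- a))"
  proof (rule sums_integral_nonneg_series)
    show "((\<lambda>t. c n * (t ^ n * w t)) has_integral c n * Beta (x + of_nat n) y) {0..1}" for n
      unfolding w_def using x y by (intro has_integral_mult_right has_integral_Beta_power) auto
    show "(\<lambda>t. w t * (1 - t/2) powr (- a)) integrable_on {0..1}"
      unfolding w_def using x y
      by (intro integrable_continuous_interval continuous_intros continuous_on_powr') auto
    show "c n * (t ^ n * w t) \<ge> 0" if "t \<in> {0..1}" for n t
      using a that by (auto simp: c_def w_def intro!: mult_nonneg_nonneg divide_nonneg_pos pochhammer_nonneg)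
    show "(\<lambda>n. c n * (t ^ n * w t)) sums (w t * (1 - t/2) powr (- a))" if "t \<in> {0..1}" for t
      using sums_mult2[OF pochhammer_series_sums_powr[of "t/2" a], of "w t"] that
      by (simp add: c_def power_divide mult_ac)
  qed
  then have "(\<lambda>n. c n * Beta (x + of_nat n) y / Beta x y)
      sums (integral {0..1} (\<lambda>t. w t * (1 - t/2) powr (- a)) / Beta x y)"
    by (rule sums_divide)
  moreover have "c n * Beta (x + of_nat n) y / Beta x y = hyp2f1_term a x (x + y) (1/2) n" for n
  proof -
    have "Beta x y > 0" "pochhammer (x + y) n > 0"
      using x y by (auto simp: Beta_def intro!: pochhammer_pos)
    then show ?thesis
      using x y by (simp add: Beta_add_of_nat c_def hyp2f1_term_def field_simps)
  qed
  ultimately show ?thesis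
    by (simp add: w_def)
qed

lemma Euler_integrand_half_substitution:
  fixes a x y s :: real
  assumes s: "0 \<le> s" "s \<le> 1"
  defines "g \<equiv> 2 * s / (1 + s)"
  shows "(2 / (1 + s)^2) * (g powr (x - 1) * (1 - g) powr (y - 1) * (1 - g/2) powr (- a))
      = 2 powr x * (s powr (x - 1) * (1 - s) powr (y - 1) * (1 + s) powr (a - x - y))"
proof -
  have u: "1 + s > 0" using s by simp
  have t1: "g powr (x - 1) = 2 powr (x - 1) * s powr (x - 1) / (1 + s) powr (x - 1)"
    using s by (simp add: g_def powr_divide powr_mult)
  have t2: "(1 - g) powr (y - 1) = (1 - s) powr (y - 1) / (1 + s) powr (y - 1)"
  proof -
    have "1 - g = (1 - s) / (1 + s)" using u by (simp add: g_def field_simps)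
    then show ?thesis using s by (simp add: powr_divide)
  qed
  have t3: "(1 - g/2) powr (- a) = (1 + s) powr a"
  proof -
    have "1 - g/2 = inverse (1 + s)" using u by (simp add: g_def field_simps)
    then show ?thesis using u by (simp add: inverse_powr powr_minus)
  qed
  have t4: "(1 + s) powr (a - x - y) = (1 + s) powr a / ((1 + s)^2 * (1 + s) powr (x - 1) * (1 + s) powr (y - 1))"
  proof -
    have "a - x - y = a - (2 + (x - 1) + (y - 1))" by simp
    then have "(1 + s) powr (a - x - y)
        = (1 + s) powr a / ((1 + s) powr 2 * (1 + s) powr (x - 1) * (1 + s) powr (y - 1))"
      by (simp only: powr_diff powr_add)
    then show ?thesis using u by simp
  qed
  have t5: "2 powr x = 2 * 2 powr (x - 1)"
    by (simp add: powr_diff)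
  show ?thesis
    unfolding t1 t2 t3 t4 t5 using u by (simp add: field_simps)
qed

lemma Euler_integral_half_substitution:
  fixes a x y :: real
  assumes x: "x > 1" and y: "y > 1"
  shows "integral {0..1} (\<lambda>t. t powr (x - 1) * (1 - t) powr (y - 1) * (1 - t/2) powr (- a))
       = 2 powr x * integral {0..1} (\<lambda>s. s powr (x - 1) * (1 - s) powr (y - 1) * (1 + s) powr (a - x - y))"
proof -
  define f where "f t = t powr (x - 1) * (1 - t) powr (y - 1) * (1 - t/2) powr (- a)" for t :: real
  define g where "g s = 2 * s / (1 + s)" for s :: real
  have substitution: "((\<lambda>s. (2 / (1 + s)^2) *\<^sub>R f (g s)) has_integral integral {g 0..g 1} f) {0..1}"
  proof (rule has_integral_substitution)
    show "g ` {0..1} \<subseteq> {0..1}"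
      by (auto simp: g_def divide_le_eq)
    show "continuous_on {0..1} f"
      unfolding f_def using x y
      by (intro continuous_intros continuous_on_powr') auto
    show "(g has_field_derivative 2 / (1 + s)^2) (at s within {0..1})" if "s \<in> {0..1}" for s
      unfolding g_def using that
      by (auto intro!: derivative_eq_intros simp: field_simps power2_eq_square)
  qed (simp_all add: g_def)
  have "g 0 = 0" "g 1 = 1"
    by (simp_all add: g_def)
  with substitution
  have transformed: "((\<lambda>s. (2 / (1 + s)^2) *\<^sub>R f (g s)) has_integral integral {0..1} f) {0..1}"
    by simp
  have pointwise: "(2 / (1 + s)^2) *\<^sub>R f (g s)
      = 2 powr x * (s powr (x - 1) * (1 - s) powr (y - 1) * (1 + s) powr (a - x - y))"
    if "s \<in> {0..1}" for s
    using Euler_integrand_half_substitution[of s] that by (simp add: f_def g_def)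
  have "integral {0..1} (\<lambda>s. 2 powr x * (s powr (x - 1) * (1 - s) powr (y - 1) * (1 + s) powr (a - x - y)))
      = integral {0..1} f"
    by (intro integral_unique has_integral_eq[OF pointwise transformed])
  then show ?thesis
    by (simp add: f_def[abs_def])
qed

lemma has_integral_Beta_square:
  fixes x p :: real
  assumes x: "x > 2" and p: "p > 0"
  shows "((\<lambda>s. s powr (x - 1) * (1 - s^2) powr p) has_integral Beta (x / 2) (p + 1) / 2) {0..1}"
proof -
  define f where "f t = t powr (x / 2 - 1) * (1 - t) powr p" for t :: real
  have substitution: "((\<lambda>s. (2 * s) *\<^sub>R f (s^2)) has_integral integral {0^2..1^2} f) {0..1::real}"
  proof (rule has_integral_substitution)
    show "continuous_on {0..1} f"
      unfolding f_def using x p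
      by (intro continuous_intros continuous_on_powr') auto
  qed (auto intro!: derivative_eq_intros power_le_one)
  moreover have "integral {0..1} f = Beta (x / 2) (p + 1)"
    unfolding f_def[abs_def] using has_integral_Beta_real[of "x / 2" "p + 1"] x p by (simp add: integral_unique)
  ultimately have transformed: "((\<lambda>s. (2 * s) *\<^sub>R f (s^2)) has_integral Beta (x / 2) (p + 1)) {0..1}"
    by simp
  have pointwise: "(2 * s) *\<^sub>R f (s^2) = 2 * (s powr (x - 1) * (1 - s^2) powr p)" if "s \<in> {0..1}" for s
  proof (cases "s = 0")
    case False
    with that have "s > 0" by simp
    then have "(s^2) powr (x / 2 - 1) = s powr (x - 2)"
      by (simp add: powr_powr algebra_simps flip: powr_numeral)
    moreover have "s * s powr (x - 2) = s powr (x - 1)"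
      using \<open>s > 0\<close> by (simp add: powr_mult_base)
    ultimately show ?thesis
      by (simp add: f_def mult_ac)
  qed (use x in \<open>simp add: f_def\<close>)
  have "((\<lambda>s. 2 * (s powr (x - 1) * (1 - s^2) powr p)) has_integral Beta (x / 2) (p + 1)) {0..1}"
    by (rule has_integral_eq[OF pointwise transformed])
  from has_integral_mult_right[OF this, of "1/2"] show ?thesis
    by simp
qed

lemma has_integral_binomial_Beta:
  fixes x p \<sigma> :: real
  assumes x: "x > 2" and p: "p > 0"
  shows "((\<lambda>s. s powr (x - 1) * (1 - s^2) powr p * (1 + \<sigma> * s) ^ i)
           has_integral (\<Sum>r\<le>i. of_nat (i choose r) * \<sigma> ^ r * Beta ((x + of_nat r) / 2) (p + 1)) / 2) {0..1}"
proof -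
  have expanded: "((\<lambda>s. \<Sum>r\<le>i. of_nat (i choose r) * \<sigma> ^ r * (s powr (x + of_nat r - 1) * (1 - s^2) powr p))
      has_integral (\<Sum>r\<le>i. of_nat (i choose r) * \<sigma> ^ r * (Beta ((x + of_nat r) / 2) (p + 1) / 2))) {0..1}"
    using x p by (intro has_integral_sum finite_atMost has_integral_mult_right has_integral_Beta_square) auto
  have pointwise: "(\<Sum>r\<le>i. of_nat (i choose r) * \<sigma> ^ r * (s powr (x + of_nat r - 1) * (1 - s^2) powr p))
      = s powr (x - 1) * (1 - s^2) powr p * (1 + \<sigma> * s) ^ i" if "s \<in> {0..1}" for s
  proof -
    have power: "s powr (x - 1) * (\<sigma> * s) ^ r = \<sigma> ^ r * s powr (x + of_nat r - 1)" for r
      using that by (cases "s = 0") (auto simp: power_mult_distrib powr_add powr_diff powr_realpow[symmetric])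
    have "(1 + \<sigma> * s) ^ i = (\<Sum>r\<le>i. of_nat (i choose r) * (\<sigma> * s) ^ r)"
      using binomial_ring[of "\<sigma> * s" 1 i] by (simp add: add.commute)
    then have "s powr (x - 1) * (1 - s^2) powr p * (1 + \<sigma> * s) ^ i
        = (\<Sum>r\<le>i. of_nat (i choose r) * (s powr (x - 1) * (\<sigma> * s) ^ r) * (1 - s^2) powr p)"
      by (simp add: sum_distrib_left sum_distrib_right mult_ac)
    then show ?thesis
      unfolding power by (simp add: mult_ac)
  qed
  have "(\<Sum>r\<le>i. of_nat (i choose r) * \<sigma> ^ r * (Beta ((x + of_nat r) / 2) (p + 1) / 2))
      = (\<Sum>r\<le>i. of_nat (i choose r) * \<sigma> ^ r * Beta ((x + of_nat r) / 2) (p + 1)) / 2"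
    by (simp add: sum_divide_distrib)
  with has_integral_eq[OF pointwise expanded] show ?thesis
    by (simp only:)
qed

lemma hyp2f1_half_sums_integral:
  fixes a x y :: real
  assumes "a > 0" "x > 1" "y > 1"
  shows "hyp2f1_term a x (x + y) (1/2) sums
           (2 powr x / Beta x y
             * integral {0..1} (\<lambda>s. s powr (x - 1) * (1 - s) powr (y - 1) * (1 + s) powr (a - x - y)))"
  using hyp2f1_half_sums_Euler_integral[OF assms] Euler_integral_half_substitution[of x y a] assms
  by simp

lemma hyp2f1_half_sums_binomial_Beta:
  fixes a b y p \<sigma> :: real
  assumes "a > 0" "b > 2" "y > 1" "p > 0"
    and kernel: "\<And>s. s \<in> {0..1} \<Longrightarrow>
      (1 - s) powr (y - 1) * (1 + s) powr (a - b - y) = (1 - s^2) powr p * (1 + \<sigma> * s) ^ i"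
  shows "hyp2f1_term a b (b + y) (1/2) sums
           (2 powr (b - 1) / Beta b y * (\<Sum>r\<le>i. of_nat (i choose r) * \<sigma> ^ r * Beta ((b + of_nat r) / 2) (p + 1)))"
proof -
  have pointwise: "s powr (b - 1) * (1 - s^2) powr p * (1 + \<sigma> * s) ^ i
      = s powr (b - 1) * (1 - s) powr (y - 1) * (1 + s) powr (a - b - y)" if "s \<in> {0..1}" for s
    using kernel[OF that] by (simp add: mult.assoc)
  have integral: "integral {0..1} (\<lambda>s. s powr (b - 1) * (1 - s) powr (y - 1) * (1 + s) powr (a - b - y))
      = (\<Sum>r\<le>i. of_nat (i choose r) * \<sigma> ^ r * Beta ((b + of_nat r) / 2) (p + 1)) / 2"
    using assms by (intro integral_unique has_integral_eq[OF pointwise] has_integral_binomial_Beta)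
  have two: "2 powr (b - 1) / Beta b y * S = 2 powr b / Beta b y * (S / 2)" for S :: real
    by (simp add: powr_diff)
  show ?thesis
    unfolding two by (rule hyp2f1_half_sums_integral[of a b y, unfolded integral]) (use assms in auto)
qed

lemma powr_add_of_nat:
  fixes u p :: real
  assumes "u \<ge> 0"
  shows "u powr (p + of_nat n) = u powr p * u ^ n"
  using assms by (cases "u = 0") (auto simp: powr_add powr_realpow)

lemma one_minus_powr_mult_one_plus_powr:
  fixes s p :: real
  assumes "s \<in> {0..1}"
  shows "(1 - s) powr p * (1 + s) powr p = (1 - s^2) powr p"
  using assms by (simp add: powr_mult[symmetric] power2_eq_square algebra_simps)

(* Closed forms of 2F1(a, b; (1 + a + b +- i)/2; 1/2); for i = 0 both are Gauss's second summation
   theorem. The denominators are written with the entire function rGamma, so no condition on their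
   arguments is ever needed. *)

definition gauss_second_plus :: "nat \<Rightarrow> 'a \<Rightarrow> 'a \<Rightarrow> 'a::{Gamma,ln}" where
  "gauss_second_plus i a b = 2 powr (b - 1)
     * Gamma ((1 + a - b - of_nat i) / 2) * Gamma ((1 + a + b + of_nat i) / 2)
     * rGamma ((1 + a - b + of_nat i) / 2) * rGamma b
     * (\<Sum>r\<le>i. (-1) ^ r * of_nat (i choose r) * Gamma ((b + of_nat r) / 2)
          * rGamma ((1 + a - of_nat i + of_nat r) / 2))"

definition gauss_second_minus :: "nat \<Rightarrow> 'a \<Rightarrow> 'a \<Rightarrow> 'a::{Gamma,ln}" where
  "gauss_second_minus i a b = 2 powr (b - 1) * Gamma ((1 + a + b - of_nat i) / 2) * rGamma b
     * (\<Sum>r\<le>i. of_nat (i choose r) * Gamma ((b + of_nat r) / 2) * rGamma ((1 + a - of_nat i + of_nat r) / 2))"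

lemma gauss_second_plus_altdef:
  "gauss_second_plus i a b = 2 powr (b - 1)
     * Gamma ((1 + a - b - of_nat i) / 2) * Gamma ((1 + a + b + of_nat i) / 2)
     / (Gamma ((1 + a - b + of_nat i) / 2) * Gamma b)
     * (\<Sum>r=0..i. (-1) ^ r * of_nat (i choose r) * Gamma ((b + of_nat r) / 2)
          / Gamma ((1 + a - of_nat i + of_nat r) / 2))"
  by (simp only: gauss_second_plus_def rGamma_inverse_Gamma divide_inverse inverse_mult_distrib mult.assoc
      atLeast0AtMost)

lemma gauss_second_minus_altdef:
  "gauss_second_minus i a b = 2 powr (b - 1) * Gamma ((1 + a + b - of_nat i) / 2) / Gamma b
     * (\<Sum>r=0..i. of_nat (i choose r) * Gamma ((b + of_nat r) / 2) / Gamma ((1 + a - of_nat i + of_nat r) / 2))"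
  by (simp only: gauss_second_minus_def rGamma_inverse_Gamma divide_inverse mult.assoc atLeast0AtMost)

lemma hyp2f1_half_sums_gauss_second_plus_real:
  fixes a b :: real
  assumes b: "b > 2" and a: "a > b + 1 + of_nat i"
  shows "hyp2f1_term a b ((1 + a + b + of_nat i) / 2) (1/2) sums gauss_second_plus i a b"
proof -
  define y where "y = (1 + a - b + of_nat i) / 2"
  define p where "p = (a - b - 1 - of_nat i) / 2"
  have p: "p > 0" and y: "y > 1" and y_eq: "y = p + 1 + of_nat i"
    using a b by (auto simp: p_def y_def field_simps)
  have kernel: "(1 - s) powr (y - 1) * (1 + s) powr (a - b - y) = (1 - s^2) powr p * (1 + (-1) * s) ^ i"
    if "s \<in> {0..1}" for s
  proof -
    have "a - b - y = p" by (simp add: p_def y_def field_simps)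
    moreover have "(1 - s) powr (y - 1) = (1 - s) powr p * (1 - s) ^ i"
      using that by (simp add: y_eq powr_add_of_nat)
    ultimately show ?thesis
      using one_minus_powr_mult_one_plus_powr[OF that, of p] by (simp add: mult_ac)
  qed
  have closed_form: "2 powr (b - 1) / Beta b y
        * (\<Sum>r\<le>i. of_nat (i choose r) * (-1) ^ r * Beta ((b + of_nat r) / 2) (p + 1))
      = gauss_second_plus i a b"
  proof -
    have arguments: "(1 + a - b - of_nat i) / 2 = p + 1" "(1 + a + b + of_nat i) / 2 = b + y"
      "(1 + a - b + of_nat i) / 2 = y" "\<And>r. (1 + a - of_nat i + of_nat r) / 2 = (b + of_nat r) / 2 + (p + 1)"
      by (simp_all add: p_def y_def field_simps)
    have sum: "(\<Sum>r\<le>i. of_nat (i choose r) * (-1) ^ r * Beta ((b + of_nat r) / 2) (p + 1))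
        = Gamma (p + 1) * (\<Sum>r\<le>i. (-1) ^ r * of_nat (i choose r) * Gamma ((b + of_nat r) / 2)
            * rGamma ((b + of_nat r) / 2 + (p + 1)))"
      by (simp add: Beta_altdef sum_distrib_left mult_ac)
    have "Gamma b \<noteq> 0" "Gamma y \<noteq> 0" "Gamma (b + y) \<noteq> 0"
      using b y by (auto intro!: Gamma_real_pos[THEN less_imp_neq, symmetric])
    then show ?thesis
      unfolding sum unfolding gauss_second_plus_def arguments Beta_def
      by (simp add: rGamma_inverse_Gamma field_simps)
  qed
  have denominator: "(1 + a + b + of_nat i) / 2 = b + y"
    by (simp add: y_def field_simps)
  show ?thesis
    unfolding denominator closed_form[symmetric] using a b y p kernel
    by (intro hyp2f1_half_sums_binomial_Beta) auto
qed

lemma hyp2f1_half_sums_gauss_second_minus_real: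
  fixes a b :: real
  assumes b: "b > 2" and a: "a > b + 1 + of_nat i"
  shows "hyp2f1_term a b ((1 + a + b - of_nat i) / 2) (1/2) sums gauss_second_minus i a b"
proof -
  define y where "y = (1 + a - b - of_nat i) / 2"
  have y: "y > 1"
    using a b by (simp add: y_def field_simps)
  have kernel: "(1 - s) powr (y - 1) * (1 + s) powr (a - b - y) = (1 - s^2) powr (y - 1) * (1 + 1 * s) ^ i"
    if "s \<in> {0..1}" for s
  proof -
    have "(1 + s) powr (a - b - y) = (1 + s) powr ((y - 1) + of_nat i)"
      by (simp add: y_def field_simps)
    also have "\<dots> = (1 + s) powr (y - 1) * (1 + s) ^ i"
      using that by (intro powr_add_of_nat) simp
    finally have "(1 + s) powr (a - b - y) = (1 + s) powr (y - 1) * (1 + s) ^ i" .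
    then show ?thesis
      using one_minus_powr_mult_one_plus_powr[OF that, of "y - 1"] by (simp add: mult_ac)
  qed
  have closed_form: "2 powr (b - 1) / Beta b y
        * (\<Sum>r\<le>i. of_nat (i choose r) * 1 ^ r * Beta ((b + of_nat r) / 2) (y - 1 + 1))
      = gauss_second_minus i a b"
  proof -
    have arguments: "(1 + a + b - of_nat i) / 2 = b + y"
      "\<And>r. (1 + a - of_nat i + of_nat r) / 2 = (b + of_nat r) / 2 + y"
      by (simp_all add: y_def field_simps)
    have sum: "(\<Sum>r\<le>i. of_nat (i choose r) * 1 ^ r * Beta ((b + of_nat r) / 2) (y - 1 + 1))
        = Gamma y * (\<Sum>r\<le>i. of_nat (i choose r) * Gamma ((b + of_nat r) / 2) * rGamma ((b + of_nat r) / 2 + y))"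
      by (simp add: Beta_altdef sum_distrib_left mult_ac)
    have "Gamma b \<noteq> 0" "Gamma y \<noteq> 0" "Gamma (b + y) \<noteq> 0"
      using b y by (auto intro!: Gamma_real_pos[THEN less_imp_neq, symmetric])
    then show ?thesis
      unfolding sum unfolding gauss_second_minus_def arguments Beta_def
      by (simp add: rGamma_inverse_Gamma field_simps)
  qed
  have denominator: "(1 + a + b - of_nat i) / 2 = b + y"
    by (simp add: y_def field_simps)
  show ?thesis
    unfolding denominator closed_form[symmetric] using a b y kernel
    by (intro hyp2f1_half_sums_binomial_Beta) auto
qed

section \<open>Analytic continuation in the parameters\<close>

lemma hyp2f1_term_Suc:
  "hyp2f1_term a b c z (Suc n)
     = hyp2f1_term a b c z n * ((a + of_nat n) * (b + of_nat n) / ((c + of_nat n) * (of_nat n + 1)) * z)"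
  by (simp add: hyp2f1_term_def pochhammer_Suc divide_inverse mult_ac)

lemma norm_hyp2f1_half_ratio_le:
  fixes a b c :: "'a::real_normed_field"
  assumes "norm a \<le> M" "norm b \<le> M" "norm c \<le> M" and n: "real n \<ge> 10 * (M + 1)"
  shows "norm ((a + of_nat n) * (b + of_nat n) / ((c + of_nat n) * (of_nat n + 1)) * (1/2)) \<le> 3/4"
proof -
  have M: "0 \<le> M"
    using assms(1) norm_ge_zero[of a] by linarith
  with n have "M \<le> real n / 10" "real n > 0"
    by auto
  have "norm (a + of_nat n) * norm (b + of_nat n) \<le> (11/10 * real n) * (11/10 * real n)"
    using norm_triangle_ineq[of a "of_nat n"] norm_triangle_ineq[of b "of_nat n"] assms M
    by (intro mult_mono) auto
  moreover have "(9/10 * real n) * real n \<le> norm (c + of_nat n) * norm (of_nat n + 1 :: 'a)"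
  proof (rule mult_mono)
    show "9/10 * real n \<le> norm (c + of_nat n)"
      using norm_diff_ineq[of "of_nat n" c] assms M by (simp add: add.commute)
    show "real n \<le> norm (of_nat n + 1 :: 'a)"
      by (metis norm_of_nat of_nat_Suc add.commute of_nat_le_iff le_SucI order_refl)
  qed simp_all
  ultimately have "norm ((a + of_nat n) * (b + of_nat n) / ((c + of_nat n) * (of_nat n + 1)))
      \<le> (11/10 * real n) * (11/10 * real n) / ((9/10 * real n) * real n)"
    using \<open>real n > 0\<close> unfolding norm_mult norm_divide by (intro frac_le) auto
  also have "\<dots> = 121/90"
    using \<open>real n > 0\<close> by (simp add: field_simps)
  finally have "norm ((a + of_nat n) * (b + of_nat n) / ((c + of_nat n) * (of_nat n + 1))) \<le> 121/90" .
  moreover have half: "norm (1/2 :: 'a) = 1/2"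
    by (simp add: norm_divide)
  ultimately show ?thesis
    unfolding norm_mult half by linarith
qed

lemma norm_hyp2f1_half_term_decay:
  fixes a b c :: "'a::real_normed_field"
  assumes "norm a \<le> M" "norm b \<le> M" "norm c \<le> M" and N: "real N \<ge> 10 * (M + 1)"
  shows "norm (hyp2f1_term a b c (1/2) (N + k)) \<le> norm (hyp2f1_term a b c (1/2) N) * (3/4) ^ k"
proof (induction k)
  case (Suc k)
  have "real (N + k) \<ge> 10 * (M + 1)"
    using N by simp
  then have "norm ((a + of_nat (N + k)) * (b + of_nat (N + k))
      / ((c + of_nat (N + k)) * (of_nat (N + k) + 1)) * (1/2)) \<le> 3/4"
    using assms by (intro norm_hyp2f1_half_ratio_le)
  then have "norm (hyp2f1_term a b c (1/2) (N + Suc k)) \<le> norm (hyp2f1_term a b c (1/2) (N + k)) * (3/4)"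
    unfolding add_Suc_right hyp2f1_term_Suc norm_mult by (intro mult_left_mono) auto
  with Suc.IH show ?case
    by (simp add: mult.assoc mult_right_mono order_trans)
qed simp

lemma uniform_limit_hyp2f1_half:
  fixes A B C :: "'b::topological_space \<Rightarrow> 'a::{real_normed_field,banach}"
  assumes K: "compact K" and cont: "continuous_on K A" "continuous_on K B" "continuous_on K C"
    and C: "\<And>z. z \<in> K \<Longrightarrow> C z \<notin> \<int>\<^sub>\<le>\<^sub>0"
  shows "uniform_limit K (\<lambda>n z. \<Sum>k<n. hyp2f1_term (A z) (B z) (C z) (1/2) k)
           (\<lambda>z. \<Sum>k. hyp2f1_term (A z) (B z) (C z) (1/2) k) sequentially"
proof -
  define t where "t z k = hyp2f1_term (A z) (B z) (C z) (1/2) k" for z k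
  have "bounded (A ` K \<union> B ` K \<union> C ` K)"
    using cont by (intro compact_imp_bounded compact_Un compact_continuous_image K)
  then obtain M where M: "\<forall>w \<in> A ` K \<union> B ` K \<union> C ` K. norm w \<le> M"
    unfolding bounded_iff by blast
  define N where "N = nat \<lceil>10 * (M + 1)\<rceil>"
  have N: "real N \<ge> 10 * (M + 1)"
    unfolding N_def by linarith
  have "continuous_on K (\<lambda>z. t z N)"
    using cont C pochhammer_eq_0_imp_nonpos_Int unfolding t_def hyp2f1_term_def
    by (intro continuous_intros) auto
  then have "bounded ((\<lambda>z. t z N) ` K)"
    by (intro compact_imp_bounded compact_continuous_image K)
  then obtain D where D: "\<forall>z\<in>K. norm (t z N) \<le> D"
    unfolding bounded_iff by blast
  show ?thesis
    unfolding t_def[symmetric]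
  proof (rule Weierstrass_m_test_ev)
    show "\<forall>\<^sub>F n in sequentially. \<forall>z\<in>K. norm (t z n) \<le> D * (4/3) ^ N * (3/4) ^ n"
      unfolding eventually_sequentially
    proof (intro exI allI impI ballI)
      fix n z assume "N \<le> n" "z \<in> K"
      then have "norm (t z n) \<le> norm (t z N) * (3/4) ^ (n - N)"
        using norm_hyp2f1_half_term_decay[where a = "A z" and b = "B z" and c = "C z" and M = M and N = N
            and k = "n - N"] M N
        by (simp add: t_def)
      also have "\<dots> \<le> D * (3/4) ^ (n - N)"
        using D \<open>z \<in> K\<close> by (simp add: mult_right_mono)
      also have "\<dots> = D * (4/3) ^ N * (3/4) ^ n"
        using \<open>N \<le> n\<close> by (simp add: power_diff field_simps)
      finally show "norm (t z n) \<le> D * (4/3) ^ N * (3/4) ^ n" .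
    qed
    show "summable (\<lambda>n. D * (4/3) ^ N * (3/4 :: real) ^ n)"
      by (intro summable_mult summable_geometric) simp
  qed
qed

lemma holomorphic_hyp2f1_half:
  assumes S: "open S" and hol: "A holomorphic_on S" "B holomorphic_on S" "C holomorphic_on S"
    and C: "\<And>z. z \<in> S \<Longrightarrow> C z \<notin> \<int>\<^sub>\<le>\<^sub>0"
  shows "(\<lambda>z. \<Sum>k. hyp2f1_term (A z) (B z) (C z) (1/2) k) holomorphic_on S"
proof (rule holomorphic_uniform_sequence[OF S])
  show "(\<lambda>z. \<Sum>k<n. hyp2f1_term (A z) (B z) (C z) (1/2) k) holomorphic_on S" for n
    using hol C pochhammer_eq_0_imp_nonpos_Int unfolding hyp2f1_term_def
    by (intro holomorphic_intros) auto
  fix z assume "z \<in> S"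
  then obtain d where d: "d > 0" "cball z d \<subseteq> S"
    using S open_contains_cball by blast
  then have "uniform_limit (cball z d) (\<lambda>n z. \<Sum>k<n. hyp2f1_term (A z) (B z) (C z) (1/2) k)
      (\<lambda>z. \<Sum>k. hyp2f1_term (A z) (B z) (C z) (1/2) k) sequentially"
    using hol C by (intro uniform_limit_hyp2f1_half holomorphic_on_imp_continuous_on) auto
  with d show "\<exists>d>0. cball z d \<subseteq> S \<and> uniform_limit (cball z d)
      (\<lambda>n z. \<Sum>k<n. hyp2f1_term (A z) (B z) (C z) (1/2) k)
      (\<lambda>z. \<Sum>k. hyp2f1_term (A z) (B z) (C z) (1/2) k) sequentially"
    by blast
qed

lemma ex_real_interval_diff_countable:
  fixes lo hi :: real
  assumes "lo < hi" "countable A"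
  shows "\<exists>x. lo < x \<and> x < hi \<and> x \<notin> A"
proof -
  have "uncountable ({lo<..<hi} - A)"
    using assms uncountable_open_interval uncountable_minus_countable by blast
  then show ?thesis
    by (metis DiffE countable_empty equals0I greaterThanLessThan_iff)
qed

lemma islimpt_of_real_interval_diff_countable:
  fixes A :: "real set"
  assumes "countable A" "lo < x0" "x0 < hi"
  shows "complex_of_real x0 islimpt complex_of_real ` ({lo<..<hi} - A)"
  unfolding islimpt_approachable
proof (intro allI impI)
  fix e :: real assume "e > 0"
  obtain x where x: "x0 < x" "x < min hi (x0 + e)" "x \<notin> A"
    using ex_real_interval_diff_countable[of x0 "min hi (x0 + e)" A] assms \<open>e > 0\<close> by auto
  then have "complex_of_real x \<in> complex_of_real ` ({lo<..<hi} - A)" "complex_of_real x \<noteq> of_real x0"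
    "dist (complex_of_real x) (of_real x0) < e"
    using assms by (auto simp: dist_norm simp flip: of_real_diff)
  then show "\<exists>x'\<in>complex_of_real ` ({lo<..<hi} - A). x' \<noteq> complex_of_real x0 \<and> dist x' (complex_of_real x0) < e"
    by blast
qed

lemma holomorphic_eq_from_real_interval:
  fixes f g :: "complex \<Rightarrow> complex" and T :: "complex set"
  assumes T: "countable T" "closed T" and hol: "f holomorphic_on - T" "g holomorphic_on - T"
    and "lo < hi"
    and eq: "\<And>x. lo < x \<Longrightarrow> x < hi \<Longrightarrow> complex_of_real x \<notin> T \<Longrightarrow> f (of_real x) = g (of_real x)"
    and w: "w \<notin> T"
  shows "f w = g w"
proof -
  define A :: "real set" where "A = of_real -` T"
  have "A \<subseteq> Re ` T"
    by (force simp: A_def)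
  then have "countable A"
    using T(1) by (blast intro: countable_subset)
  then obtain x0 where x0: "lo < x0" "x0 < hi" "x0 \<notin> A"
    using ex_real_interval_diff_countable[OF \<open>lo < hi\<close>] by blast
  have "(\<lambda>z. f z - g z) w = 0"
  proof (rule analytic_continuation[where f = "\<lambda>z. f z - g z" and S = "- T"
        and U = "of_real ` ({lo<..<hi} - A)" and \<xi> = "of_real x0"])
    show "(\<lambda>z. f z - g z) holomorphic_on - T"
      using hol by (intro holomorphic_intros)
    show "connected (- T)"
      using connected_open_diff_countable[of UNIV T] T by (simp add: Compl_eq_Diff_UNIV connected_UNIV)
    show "complex_of_real x0 islimpt of_real ` ({lo<..<hi} - A)"
      using islimpt_of_real_interval_diff_countable[OF \<open>countable A\<close> x0(1,2)] .
    show "f z - g z = 0" if "z \<in> of_real ` ({lo<..<hi} - A)" for z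
      using that eq by (auto simp: A_def)
  qed (use T x0 w in \<open>auto simp: A_def\<close>)
  then show ?thesis
    by simp
qed

lemma countable_vimage_nonpos_Ints:
  fixes f :: "'a \<Rightarrow> 'b::ring_1"
  assumes "inj f"
  shows "countable {z. f z \<in> \<int>\<^sub>\<le>\<^sub>0}"
proof (rule countable_image_inj_on)
  have "f ` {z. f z \<in> \<int>\<^sub>\<le>\<^sub>0} \<subseteq> range of_int"
    by (auto elim: nonpos_Ints_cases)
  then show "countable (f ` {z. f z \<in> \<int>\<^sub>\<le>\<^sub>0})"
    by (rule countable_subset) simp
qed (use assms in \<open>simp add: inj_on_def\<close>)

lemma closed_vimage_nonpos_Ints:
  fixes f :: "'a::topological_space \<Rightarrow> 'b::real_normed_algebra_1"
  assumes "continuous_on UNIV f"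
  shows "closed {z. f z \<in> \<int>\<^sub>\<le>\<^sub>0}"
  using closed_vimage[OF closed_nonpos_Ints assms] by (simp add: vimage_def)

lemma hyp2f1_term_of_real:
  "hyp2f1_term (of_real a) (of_real b) (of_real c) (of_real z) n
     = (of_real (hyp2f1_term a b c z n) :: 'a::real_normed_field)"
  by (simp add: hyp2f1_term_def pochhammer_of_real)

lemma gauss_second_plus_of_real:
  "gauss_second_plus i (complex_of_real a) (complex_of_real b) = complex_of_real (gauss_second_plus i a b)"
  by (simp add: gauss_second_plus_def powr_of_real[symmetric] Gamma_complex_of_real[symmetric]
      rGamma_complex_of_real[symmetric])

lemma gauss_second_minus_of_real:
  "gauss_second_minus i (complex_of_real a) (complex_of_real b) = complex_of_real (gauss_second_minus i a b)"
  by (simp add: gauss_second_minus_def powr_of_real[symmetric] Gamma_complex_of_real[symmetric]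
      rGamma_complex_of_real[symmetric])

lemma suminf_hyp2f1_half_of_real:
  fixes a b c s :: real
  assumes "hyp2f1_term a b c (1/2) sums s"
  shows "(\<Sum>n. hyp2f1_term (complex_of_real a) (of_real b) (of_real c) (1/2) n) = of_real s"
proof -
  have "(\<lambda>n. hyp2f1_term (complex_of_real a) (of_real b) (of_real c) (of_real (1/2)) n) sums of_real s"
    using sums_of_real[OF assms] by (simp only: hyp2f1_term_of_real)
  then show ?thesis
    by (simp add: sums_iff)
qed

lemma suminf_hyp2f1_gauss_second_plus_real_b:
  fixes a :: complex and b :: real
  assumes b: "b > 2"
    and a: "(1 + a + of_real b + of_nat i) / 2 \<notin> \<int>\<^sub>\<le>\<^sub>0" "(1 + a - of_real b - of_nat i) / 2 \<notin> \<int>\<^sub>\<le>\<^sub>0"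
  shows "(\<Sum>n. hyp2f1_term a (of_real b) ((1 + a + of_real b + of_nat i) / 2) (1/2) n)
       = gauss_second_plus i a (of_real b)"
proof -
  define T :: "complex set" where "T = {z. (1 + z + of_real b + of_nat i) / 2 \<in> \<int>\<^sub>\<le>\<^sub>0}
    \<union> {z. (1 + z - of_real b - of_nat i) / 2 \<in> \<int>\<^sub>\<le>\<^sub>0}"
  have countable: "countable T"
    unfolding T_def
    by (intro countable_Un countable_UN countable_vimage_nonpos_Ints) (auto simp: inj_on_def)
  have closed: "closed T"
    unfolding T_def
    by (intro closed_Un closed_UN ballI finite_atMost closed_vimage_nonpos_Ints continuous_intros) auto
  show ?thesis
  proof (rule holomorphic_eq_from_real_interval[OF countable closed,
        where f = "\<lambda>z. \<Sum>n. hyp2f1_term z (of_real b) ((1 + z + of_real b + of_nat i) / 2) (1/2) n"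
          and g = "\<lambda>z. gauss_second_plus i z (of_real b)"
          and lo = "b + 1 + of_nat i" and hi = "b + 2 + of_nat i"])
    show "(\<lambda>z. \<Sum>n. hyp2f1_term z (of_real b) ((1 + z + of_real b + of_nat i) / 2) (1/2) n)
        holomorphic_on - T"
    proof (rule holomorphic_hyp2f1_half)
      show "open (- T)"
        using closed by auto
    qed (auto simp: T_def intro!: holomorphic_intros)
    show "(\<lambda>z. gauss_second_plus i z (of_real b)) holomorphic_on - T"
      unfolding gauss_second_plus_def by (intro holomorphic_intros holomorphic_Gamma') (auto simp: T_def)
    show "(\<Sum>n. hyp2f1_term (complex_of_real x) (of_real b)
          ((1 + of_real x + of_real b + of_nat i) / 2) (1/2) n)
        = gauss_second_plus i (of_real x) (of_real b)"
      if "b + 1 + of_nat i < x" "x < b + 2 + of_nat i" for x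
      using suminf_hyp2f1_half_of_real[OF hyp2f1_half_sums_gauss_second_plus_real[where a = x and b = b]]
        that b
      by (simp add: gauss_second_plus_of_real)
  qed (use a in \<open>auto simp: T_def\<close>)
qed

lemma suminf_hyp2f1_gauss_second_plus:
  fixes a b :: complex
  assumes "(1 + a + b + of_nat i) / 2 \<notin> \<int>\<^sub>\<le>\<^sub>0" "(1 + a - b - of_nat i) / 2 \<notin> \<int>\<^sub>\<le>\<^sub>0"
    and "\<And>r. r \<le> i \<Longrightarrow> (b + of_nat r) / 2 \<notin> \<int>\<^sub>\<le>\<^sub>0"
  shows "(\<Sum>n. hyp2f1_term a b ((1 + a + b + of_nat i) / 2) (1/2) n) = gauss_second_plus i a b"
proof -
  define T :: "complex set" where "T = {z. (1 + a + z + of_nat i) / 2 \<in> \<int>\<^sub>\<le>\<^sub>0}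
    \<union> {z. (1 + a - z - of_nat i) / 2 \<in> \<int>\<^sub>\<le>\<^sub>0} \<union> (\<Union>r\<le>i. {z. (z + of_nat r) / 2 \<in> \<int>\<^sub>\<le>\<^sub>0})"
  have countable: "countable T"
    unfolding T_def
    by (intro countable_Un countable_UN countable_vimage_nonpos_Ints) (auto simp: inj_on_def)
  have closed: "closed T"
    unfolding T_def
    by (intro closed_Un closed_UN ballI finite_atMost closed_vimage_nonpos_Ints continuous_intros) auto
  show ?thesis
  proof (rule holomorphic_eq_from_real_interval[OF countable closed,
        where f = "\<lambda>z. \<Sum>n. hyp2f1_term a z ((1 + a + z + of_nat i) / 2) (1/2) n"
          and g = "gauss_second_plus i a" and lo = 2 and hi = 3])
    show "(\<lambda>z. \<Sum>n. hyp2f1_term a z ((1 + a + z + of_nat i) / 2) (1/2) n) holomorphic_on - T"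
    proof (rule holomorphic_hyp2f1_half)
      show "open (- T)"
        using closed by auto
    qed (auto simp: T_def intro!: holomorphic_intros)
    show "gauss_second_plus i a holomorphic_on - T"
      unfolding gauss_second_plus_def by (intro holomorphic_intros holomorphic_Gamma') (auto simp: T_def)
    show "(\<Sum>n. hyp2f1_term a (of_real x) ((1 + a + of_real x + of_nat i) / 2) (1/2) n)
        = gauss_second_plus i a (of_real x)"
      if "2 < x" "x < 3" "complex_of_real x \<notin> T" for x
      using that by (intro suminf_hyp2f1_gauss_second_plus_real_b) (auto simp: T_def add_ac)
  qed (use assms in \<open>auto simp: T_def\<close>)
qed

lemma suminf_hyp2f1_gauss_second_minus_real_b:
  fixes a :: complex and b :: real
  assumes b: "b > 2" and a: "(1 + a + of_real b - of_nat i) / 2 \<notin> \<int>\<^sub>\<le>\<^sub>0"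
  shows "(\<Sum>n. hyp2f1_term a (of_real b) ((1 + a + of_real b - of_nat i) / 2) (1/2) n)
       = gauss_second_minus i a (of_real b)"
proof -
  define T :: "complex set" where "T = {z. (1 + z + of_real b - of_nat i) / 2 \<in> \<int>\<^sub>\<le>\<^sub>0}"
  have countable: "countable T"
    unfolding T_def
    by (intro countable_Un countable_UN countable_vimage_nonpos_Ints) (auto simp: inj_on_def)
  have closed: "closed T"
    unfolding T_def
    by (intro closed_Un closed_UN ballI finite_atMost closed_vimage_nonpos_Ints continuous_intros) auto
  show ?thesis
  proof (rule holomorphic_eq_from_real_interval[OF countable closed,
        where f = "\<lambda>z. \<Sum>n. hyp2f1_term z (of_real b) ((1 + z + of_real b - of_nat i) / 2) (1/2) n"
          and g = "\<lambda>z. gauss_second_minus i z (of_real b)"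
          and lo = "b + 1 + of_nat i" and hi = "b + 2 + of_nat i"])
    show "(\<lambda>z. \<Sum>n. hyp2f1_term z (of_real b) ((1 + z + of_real b - of_nat i) / 2) (1/2) n)
        holomorphic_on - T"
    proof (rule holomorphic_hyp2f1_half)
      show "open (- T)"
        using closed by auto
    qed (auto simp: T_def intro!: holomorphic_intros)
    show "(\<lambda>z. gauss_second_minus i z (of_real b)) holomorphic_on - T"
      unfolding gauss_second_minus_def by (intro holomorphic_intros holomorphic_Gamma') (auto simp: T_def)
    show "(\<Sum>n. hyp2f1_term (complex_of_real x) (of_real b)
          ((1 + of_real x + of_real b - of_nat i) / 2) (1/2) n)
        = gauss_second_minus i (of_real x) (of_real b)"
      if "b + 1 + of_nat i < x" "x < b + 2 + of_nat i" for x
      using suminf_hyp2f1_half_of_real[OF hyp2f1_half_sums_gauss_second_minus_real[where a = x and b = b]]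
        that b
      by (simp add: gauss_second_minus_of_real)
  qed (use a in \<open>auto simp: T_def\<close>)
qed

lemma suminf_hyp2f1_gauss_second_minus:
  fixes a b :: complex
  assumes "(1 + a + b - of_nat i) / 2 \<notin> \<int>\<^sub>\<le>\<^sub>0" and "\<And>r. r \<le> i \<Longrightarrow> (b + of_nat r) / 2 \<notin> \<int>\<^sub>\<le>\<^sub>0"
  shows "(\<Sum>n. hyp2f1_term a b ((1 + a + b - of_nat i) / 2) (1/2) n) = gauss_second_minus i a b"
proof -
  define T :: "complex set" where "T = {z. (1 + a + z - of_nat i) / 2 \<in> \<int>\<^sub>\<le>\<^sub>0}
    \<union> (\<Union>r\<le>i. {z. (z + of_nat r) / 2 \<in> \<int>\<^sub>\<le>\<^sub>0})"
  have countable: "countable T"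
    unfolding T_def
    by (intro countable_Un countable_UN countable_vimage_nonpos_Ints) (auto simp: inj_on_def)
  have closed: "closed T"
    unfolding T_def
    by (intro closed_Un closed_UN ballI finite_atMost closed_vimage_nonpos_Ints continuous_intros) auto
  show ?thesis
  proof (rule holomorphic_eq_from_real_interval[OF countable closed,
        where f = "\<lambda>z. \<Sum>n. hyp2f1_term a z ((1 + a + z - of_nat i) / 2) (1/2) n"
          and g = "gauss_second_minus i a" and lo = 2 and hi = 3])
    show "(\<lambda>z. \<Sum>n. hyp2f1_term a z ((1 + a + z - of_nat i) / 2) (1/2) n) holomorphic_on - T"
    proof (rule holomorphic_hyp2f1_half)
      show "open (- T)"
        using closed by auto
    qed (auto simp: T_def intro!: holomorphic_intros)
    show "gauss_second_minus i a holomorphic_on - T"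
      unfolding gauss_second_minus_def by (intro holomorphic_intros holomorphic_Gamma') (auto simp: T_def)
    show "(\<Sum>n. hyp2f1_term a (of_real x) ((1 + a + of_real x - of_nat i) / 2) (1/2) n)
        = gauss_second_minus i a (of_real x)"
      if "2 < x" "x < 3" "complex_of_real x \<notin> T" for x
      using that by (intro suminf_hyp2f1_gauss_second_minus_real_b) (auto simp: T_def add_ac)
  qed (use assms in \<open>auto simp: T_def\<close>)
qed

lemma kdf_half_plus_closed_form:
  assumes summable: "kdf_term [\<alpha>] [\<beta>] [\<epsilon>] [] [\<beta> - \<epsilon>, 1 + \<alpha> - 2*\<beta> + \<epsilon> + of_nat i]
        [1 + \<alpha> - \<beta> + \<epsilon> + of_nat i] (1/2) (1/2) summable_on UNIV"
    and \<beta>: "\<beta> \<notin> \<int>\<^sub>\<le>\<^sub>0" and d: "1 + \<alpha> - \<beta> + \<epsilon> + of_nat i \<notin> \<int>\<^sub>\<le>\<^sub>0"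
    and "\<beta> - \<epsilon> - of_nat i \<notin> \<int>\<^sub>\<le>\<^sub>0"
    and "\<And>r. r \<le> i \<Longrightarrow> \<epsilon> - \<beta> + (1 + \<alpha> + of_nat i + of_nat r) / 2 \<notin> \<int>\<^sub>\<le>\<^sub>0"
  shows "kdf [\<alpha>] [\<beta>] [\<epsilon>] [] [\<beta> - \<epsilon>, 1 + \<alpha> - 2*\<beta> + \<epsilon> + of_nat i]
        [1 + \<alpha> - \<beta> + \<epsilon> + of_nat i] (1/2) (1/2)
     = (2::complex) powr (of_nat i + \<alpha> - 2*\<beta> + 2*\<epsilon>)
         * Gamma (\<beta> - \<epsilon> - of_nat i) * Gamma (1 + \<alpha> - \<beta> + \<epsilon> + of_nat i)
         / (Gamma (\<beta> - \<epsilon>) * Gamma (1 + \<alpha> - 2*\<beta> + 2*\<epsilon> + of_nat i))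
         * (\<Sum>r=0..i. (-1)^r * of_nat (i choose r)
              * Gamma (\<epsilon> - \<beta> + (1 + \<alpha> + of_nat i + of_nat r) / 2)
              / Gamma ((1 + \<alpha> - of_nat i + of_nat r) / 2))"
proof -
  define e where "e = 1 + \<alpha> - 2*\<beta> + 2*\<epsilon> + of_nat i"
  have arguments: "1 + \<alpha> - 2*\<beta> + \<epsilon> + of_nat i + \<epsilon> = e"
    "1 + \<alpha> - \<beta> + \<epsilon> + of_nat i = (1 + \<alpha> + e + of_nat i) / 2"
    "(1 + \<alpha> - e - of_nat i) / 2 = \<beta> - \<epsilon> - of_nat i"
    "\<And>r. (e + of_nat r) / 2 = \<epsilon> - \<beta> + (1 + \<alpha> + of_nat i + of_nat r) / 2"
    "e - 1 = of_nat i + \<alpha> - 2*\<beta> + 2*\<epsilon>" "(1 + \<alpha> - e + of_nat i) / 2 = \<beta> - \<epsilon>"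
    by (simp_all add: e_def field_simps)
  have "kdf [\<alpha>] [\<beta>] [\<epsilon>] [] [\<beta> - \<epsilon>, 1 + \<alpha> - 2*\<beta> + \<epsilon> + of_nat i]
        [1 + \<alpha> - \<beta> + \<epsilon> + of_nat i] (1/2) (1/2)
      = (\<Sum>n. hyp2f1_term \<alpha> (1 + \<alpha> - 2*\<beta> + \<epsilon> + of_nat i + \<epsilon>) (1 + \<alpha> - \<beta> + \<epsilon> + of_nat i) (1/2) n)"
    by (rule sums_unique[OF hyp2f1_term_sums_kdf[OF summable \<beta> d]]) simp
  also have "\<dots> = (\<Sum>n. hyp2f1_term \<alpha> e ((1 + \<alpha> + e + of_nat i) / 2) (1/2) n)"
    by (simp only: arguments(1,2))
  also have "\<dots> = gauss_second_plus i \<alpha> e"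
    using assms by (intro suminf_hyp2f1_gauss_second_plus) (simp_all add: arguments(2-4)[symmetric])
  finally show ?thesis
    by (simp only: gauss_second_plus_altdef arguments(3-6) arguments(2)[symmetric]) (simp only: e_def)
qed

lemma kdf_half_minus_closed_form:
  assumes summable: "kdf_term [\<alpha>] [\<beta>] [\<epsilon>] [] [\<beta> - \<epsilon>, 1 + \<alpha> - 2*\<beta> + \<epsilon> - of_nat i]
        [1 + \<alpha> - \<beta> + \<epsilon> - of_nat i] (1/2) (1/2) summable_on UNIV"
    and \<beta>: "\<beta> \<notin> \<int>\<^sub>\<le>\<^sub>0" and d: "1 + \<alpha> - \<beta> + \<epsilon> - of_nat i \<notin> \<int>\<^sub>\<le>\<^sub>0"
    and "\<And>r. r \<le> i \<Longrightarrow> \<epsilon> - \<beta> + (1 + \<alpha> - of_nat i + of_nat r) / 2 \<notin> \<int>\<^sub>\<le>\<^sub>0"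
  shows "kdf [\<alpha>] [\<beta>] [\<epsilon>] [] [\<beta> - \<epsilon>, 1 + \<alpha> - 2*\<beta> + \<epsilon> - of_nat i]
        [1 + \<alpha> - \<beta> + \<epsilon> - of_nat i] (1/2) (1/2)
     = (2::complex) powr (- of_nat i + \<alpha> - 2*\<beta> + 2*\<epsilon>)
         * Gamma (1 + \<alpha> - \<beta> + \<epsilon> - of_nat i)
         / Gamma (1 + \<alpha> - 2*\<beta> + 2*\<epsilon> - of_nat i)
         * (\<Sum>r=0..i. of_nat (i choose r)
              * Gamma (\<epsilon> - \<beta> + (1 + \<alpha> - of_nat i + of_nat r) / 2)
              / Gamma ((1 + \<alpha> - of_nat i + of_nat r) / 2))"
proof -
  define e where "e = 1 + \<alpha> - 2*\<beta> + 2*\<epsilon> - of_nat i"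
  have arguments: "1 + \<alpha> - 2*\<beta> + \<epsilon> - of_nat i + \<epsilon> = e"
    "1 + \<alpha> - \<beta> + \<epsilon> - of_nat i = (1 + \<alpha> + e - of_nat i) / 2"
    "\<And>r. (e + of_nat r) / 2 = \<epsilon> - \<beta> + (1 + \<alpha> - of_nat i + of_nat r) / 2"
    "e - 1 = - of_nat i + \<alpha> - 2*\<beta> + 2*\<epsilon>"
    by (simp_all add: e_def field_simps)
  have "kdf [\<alpha>] [\<beta>] [\<epsilon>] [] [\<beta> - \<epsilon>, 1 + \<alpha> - 2*\<beta> + \<epsilon> - of_nat i]
        [1 + \<alpha> - \<beta> + \<epsilon> - of_nat i] (1/2) (1/2)
      = (\<Sum>n. hyp2f1_term \<alpha> (1 + \<alpha> - 2*\<beta> + \<epsilon> - of_nat i + \<epsilon>) (1 + \<alpha> - \<beta> + \<epsilon> - of_nat i) (1/2) n)"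
    by (rule sums_unique[OF hyp2f1_term_sums_kdf[OF summable \<beta> d]]) simp
  also have "\<dots> = (\<Sum>n. hyp2f1_term \<alpha> e ((1 + \<alpha> + e - of_nat i) / 2) (1/2) n)"
    by (simp only: arguments(1,2))
  also have "\<dots> = gauss_second_minus i \<alpha> e"
    using assms by (intro suminf_hyp2f1_gauss_second_minus) (simp_all add: arguments(2-3)[symmetric])
  finally show ?thesis
    by (simp only: gauss_second_minus_altdef arguments(3-4) arguments(2)[symmetric]) (simp only: e_def)
qed

theorem theorem2:
  fixes i :: nat and \<alpha> \<beta> \<epsilon> :: complex
  shows
   "(kdf_term [\<alpha>] [\<beta>] [\<epsilon>] [] [\<beta> - \<epsilon>, 1 + \<alpha> - 2*\<beta> + \<epsilon> + of_nat i]
        [1 + \<alpha> - \<beta> + \<epsilon> + of_nat i] (1/2) (1/2) summable_on UNIV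
     \<and> \<beta> \<notin> \<int>\<^sub>\<le>\<^sub>0 \<and> 1 + \<alpha> - \<beta> + \<epsilon> + of_nat i \<notin> \<int>\<^sub>\<le>\<^sub>0
     \<and> \<beta> - \<epsilon> - of_nat i \<notin> \<int>\<^sub>\<le>\<^sub>0 \<and> \<beta> - \<epsilon> \<notin> \<int>\<^sub>\<le>\<^sub>0
     \<and> 1 + \<alpha> - 2*\<beta> + 2*\<epsilon> + of_nat i \<notin> \<int>\<^sub>\<le>\<^sub>0
     \<and> (\<forall>r\<le>i. \<epsilon> - \<beta> + (1 + \<alpha> + of_nat i + of_nat r) / 2 \<notin> \<int>\<^sub>\<le>\<^sub>0
              \<and> (1 + \<alpha> - of_nat i + of_nat r) / 2 \<notin> \<int>\<^sub>\<le>\<^sub>0)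
     \<longrightarrow>
     kdf [\<alpha>] [\<beta>] [\<epsilon>] [] [\<beta> - \<epsilon>, 1 + \<alpha> - 2*\<beta> + \<epsilon> + of_nat i]
        [1 + \<alpha> - \<beta> + \<epsilon> + of_nat i] (1/2) (1/2)
     = (2::complex) powr (of_nat i + \<alpha> - 2*\<beta> + 2*\<epsilon>)
         * Gamma (\<beta> - \<epsilon> - of_nat i) * Gamma (1 + \<alpha> - \<beta> + \<epsilon> + of_nat i)
         / (Gamma (\<beta> - \<epsilon>) * Gamma (1 + \<alpha> - 2*\<beta> + 2*\<epsilon> + of_nat i))
         * (\<Sum>r=0..i. (-1)^r * of_nat (i choose r)
              * Gamma (\<epsilon> - \<beta> + (1 + \<alpha> + of_nat i + of_nat r) / 2)
              / Gamma ((1 + \<alpha> - of_nat i + of_nat r) / 2)))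
   \<and>
   (kdf_term [\<alpha>] [\<beta>] [\<epsilon>] [] [\<beta> - \<epsilon>, 1 + \<alpha> - 2*\<beta> + \<epsilon> - of_nat i]
        [1 + \<alpha> - \<beta> + \<epsilon> - of_nat i] (1/2) (1/2) summable_on UNIV
     \<and> \<beta> \<notin> \<int>\<^sub>\<le>\<^sub>0 \<and> 1 + \<alpha> - \<beta> + \<epsilon> - of_nat i \<notin> \<int>\<^sub>\<le>\<^sub>0
     \<and> 1 + \<alpha> - 2*\<beta> + 2*\<epsilon> - of_nat i \<notin> \<int>\<^sub>\<le>\<^sub>0
     \<and> (\<forall>r\<le>i. \<epsilon> - \<beta> + (1 + \<alpha> - of_nat i + of_nat r) / 2 \<notin> \<int>\<^sub>\<le>\<^sub>0
              \<and> (1 + \<alpha> - of_nat i + of_nat r) / 2 \<notin> \<int>\<^sub>\<le>\<^sub>0)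
     \<longrightarrow>
     kdf [\<alpha>] [\<beta>] [\<epsilon>] [] [\<beta> - \<epsilon>, 1 + \<alpha> - 2*\<beta> + \<epsilon> - of_nat i]
        [1 + \<alpha> - \<beta> + \<epsilon> - of_nat i] (1/2) (1/2)
     = (2::complex) powr (- of_nat i + \<alpha> - 2*\<beta> + 2*\<epsilon>)
         * Gamma (1 + \<alpha> - \<beta> + \<epsilon> - of_nat i)
         / Gamma (1 + \<alpha> - 2*\<beta> + 2*\<epsilon> - of_nat i)
         * (\<Sum>r=0..i. of_nat (i choose r)
              * Gamma (\<epsilon> - \<beta> + (1 + \<alpha> - of_nat i + of_nat r) / 2)
              / Gamma ((1 + \<alpha> - of_nat i + of_nat r) / 2)))"
  using kdf_half_plus_closed_form[of \<alpha> \<beta> \<epsilon> i] kdf_half_minus_closed_form[of \<alpha> \<beta> \<epsilon> i] by blast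

end
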